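(* For every $n\in\mathbb N$, the invariant $c_n$ of ordered virtual tangles is a GPV finite type invariant of degree $n$.
   Context: An $n$-tangle ($n\ge 1$) is a collection of $n$ disjoint oriented intervals ("strings") and finitely many oriented circles properly embedded in the 3-ball with string endpoints at prescribed boundary points; virtual tangle diagrams may contain, besides classical (real) crossings, virtual crossings (no over/under information), and virtual tangles are such diagrams modulo classical and virtual Reidemeister moves. For a string, its source is its input and its target its output. A tangle with $n$ strings is ordered if its $2n$ endpoints are numbered by integers $j_1<\dots<j_{2n}$ (up to monotone relabeling) so that every input receives some $j_{2k-1}$ and every output some $j_{2k}$; the ordering is coherent if for each $k$ the string with input $j_{2k-1}$ has output $j_{2k}$. For an ordered tangle diagram $D$: a state $S$ is a set of real crossings; $D(S)$ is obtained by smoothing each crossing of $S$ respecting orientations and inherits the endpoint numbering. $S$ is coherent if $D(S)$ has no closed components and its ordering is coherent. For coherent $S$, traverse $D(S)$ along the string from $j_1$ to $j_2$, then the string from $j_3$ to $j_4$, etc.; the neighborhood of each smoothed crossing is passed twice, and $S$ is descending if for each crossing of $S$ its neighborhood is first entered along the former overpass. $\operatorname{sign}(S)$ is the product of local writhes of the crossings of $S$. Define $c_n(D)=\sum\operatorname{sign}(S)$ over descending states with $n$ crossings; it is an invariant of ordered virtual tangles. GPV finite type. Given a virtual tangle diagram $D$ with $m$ marked, ordered real crossings $d_1,\dots,d_m$ and $I=(i_1,\dots,i_m)\in\{0,1\}^m$, let $D_I$ be obtained from $D$ by turning each $d_k$ with $i_k=1$ into a virtual crossing, and $|I|=\sum_k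 i_k$. An invariant $v$ is of GPV degree less than $m$ if $\sum_{I\in\{0,1\}^m}(-1)^{|I|}v(D_I)=0$ for all such $D$ and choices of crossings. $v$ is of GPV degree $n$ if it is of degree less than $n+1$ but not of degree less than $n$. *)

theory Defs
  imports Main
begin

text \<open>
  Virtual crossings carry no combinatorial information (detour moves), so a
  virtual tangle diagram is recorded by:
  a finite set of points on its components (string endpoints, the two
  passages through each real crossing, and possibly further plain points,
  e.g. on crossingless circles), the successor map along the orientation,
  the input/output endpoints with their integer numbering, and for every real
  crossing its over-passage point, its under-passage point and its local writhe.
\<close>

record tdiag =
  pts   :: "nat set"
  nxt   :: "nat \<Rightarrow> nat"
  ins   :: "nat set"
  outs  :: "nat set"
  lab   :: "nat \<Rightarrow> nat"
  xings :: "nat set"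
  ov    :: "nat \<Rightarrow> nat"
  un    :: "nat \<Rightarrow> nat"
  wr    :: "nat \<Rightarrow> int"

definition endpts :: "tdiag \<Rightarrow> nat set" where
  "endpts D = ins D \<union> outs D"

text \<open>0-based rank of a label among the endpoint labels.\<close>
definition rank :: "tdiag \<Rightarrow> nat \<Rightarrow> nat" where
  "rank D l = card {y \<in> endpts D. lab D y < l}"

text \<open>The successor map is a bijection from non-outputs to non-inputs, so the
  components are oriented intervals from an input to an output and oriented
  circles.  The ordering: inputs get labels of odd 1-based rank j_{2k-1},
  outputs labels of even rank j_{2k}.\<close>
definition wf_tangle :: "tdiag \<Rightarrow> bool" where
  "wf_tangle D \<longleftrightarrow>
     finite (pts D) \<and> finite (xings D) \<and>
     ins D \<subseteq> pts D \<and> outs D \<subseteq> pts D \<and> ins D \<inter> outs D = {} \<and> ins D \<noteq> {} \<and>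
     bij_betw (nxt D) (pts D - outs D) (pts D - ins D) \<and>
     inj_on (ov D) (xings D) \<and> inj_on (un D) (xings D) \<and>
     ov D ` xings D \<inter> un D ` xings D = {} \<and>
     ov D ` xings D \<subseteq> pts D - endpts D \<and> un D ` xings D \<subseteq> pts D - endpts D \<and>
     (\<forall>c \<in> xings D. wr D c = 1 \<or> wr D c = -1) \<and>
     inj_on (lab D) (endpts D) \<and>
     (\<forall>e \<in> endpts D. (e \<in> ins D \<longleftrightarrow> even (rank D (lab D e))))"

text \<open>Successor map of the smoothed diagram D(S): the oriented smoothing of
  crossing c joins the incoming overpass to the outgoing underpass and the
  incoming underpass to the outgoing overpass.  The point ov c thus lies on the
  piece of D(S) entering the smoothed crossing along the former overpass, and
  un c on the piece entering along the former underpass.\<close>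
definition snxt :: "tdiag \<Rightarrow> nat set \<Rightarrow> nat \<Rightarrow> nat" where
  "snxt D S x =
     (if \<exists>c \<in> S. x = ov D c then nxt D (un D (THE c. c \<in> S \<and> x = ov D c))
      else if \<exists>c \<in> S. x = un D c then nxt D (ov D (THE c. c \<in> S \<and> x = un D c))
      else nxt D x)"

definition on_path :: "tdiag \<Rightarrow> nat set \<Rightarrow> nat \<Rightarrow> nat \<Rightarrow> nat \<Rightarrow> bool" where
  "on_path D S e d x \<longleftrightarrow> e \<in> ins D \<and> (snxt D S ^^ d) e = x \<and>
     (\<forall>d' < d. (snxt D S ^^ d') e \<notin> outs D)"

text \<open>Coherent state: D(S) has no closed components (every point lies on a
  string), and the ordering of D(S) is coherent (the string with input j_{2k-1}
  has output j_{2k}).\<close>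
definition coherent :: "tdiag \<Rightarrow> nat set \<Rightarrow> bool" where
  "coherent D S \<longleftrightarrow> S \<subseteq> xings D \<and>
     (\<forall>x \<in> pts D. \<exists>e d. on_path D S e d x) \<and>
     (\<forall>e d x. on_path D S e d x \<and> x \<in> outs D \<longrightarrow>
        rank D (lab D x) = Suc (rank D (lab D e)))"

text \<open>Traversal of D(S): first the string from j_1, then from j_3, etc.
  visited_before D S x y: x is passed before y.\<close>
definition visited_before :: "tdiag \<Rightarrow> nat set \<Rightarrow> nat \<Rightarrow> nat \<Rightarrow> bool" where
  "visited_before D S x y \<longleftrightarrow>
     (\<exists>e1 d1 e2 d2. on_path D S e1 d1 x \<and> on_path D S e2 d2 y \<and>
        (lab D e1 < lab D e2 \<or> (e1 = e2 \<and> d1 < d2)))"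

definition descending :: "tdiag \<Rightarrow> nat set \<Rightarrow> bool" where
  "descending D S \<longleftrightarrow> (\<forall>c \<in> S. visited_before D S (ov D c) (un D c))"

definition state_sign :: "tdiag \<Rightarrow> nat set \<Rightarrow> int" where
  "state_sign D S = (\<Prod>c \<in> S. wr D c)"

definition c_inv :: "nat \<Rightarrow> tdiag \<Rightarrow> int" where
  "c_inv n D = (\<Sum>S \<in> {S. S \<subseteq> xings D \<and> card S = n \<and> coherent D S \<and> descending D S}.
                  state_sign D S)"

definition virtualize :: "nat set \<Rightarrow> tdiag \<Rightarrow> tdiag" where
  "virtualize T D = D\<lparr>xings := xings D - T\<rparr>"

text \<open>GPV degree less than m (marked crossings d_1..d_m, distinct; the sum over
  I in {0,1}^m is the sum over the subsets T of marked crossings turned virtual).\<close>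
definition gpv_degree_less :: "(tdiag \<Rightarrow> int) \<Rightarrow> nat \<Rightarrow> bool" where
  "gpv_degree_less v m \<longleftrightarrow>
     (\<forall>D M. wf_tangle D \<and> M \<subseteq> xings D \<and> card M = m \<longrightarrow>
        (\<Sum>T \<in> Pow M. (-1) ^ card T * v (virtualize T D)) = 0)"

definition gpv_degree :: "(tdiag \<Rightarrow> int) \<Rightarrow> nat \<Rightarrow> bool" where
  "gpv_degree v n \<longleftrightarrow> gpv_degree_less v (Suc n) \<and> \<not> gpv_degree_less v n"

end

theory Submission
  imports Defs
begin

text \<open>
  Turning a set T of crossings virtual removes exactly the states meeting T and changes
  neither coherence nor descent of the remaining ones.  By inclusion-exclusion the
  alternating sum over the subsets T of the marked crossings M is therefore the signed
  number of descending coherent n-states containing M.  There is none if M has n+1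
  crossings, so c_n has degree at most n; and for a diagram with n crossings, all of them
  marked, whose full smoothing is coherent and descending, the sum is 1.
\<close>

lemma sum_Pow_neg_one_power_card:
  assumes "finite X"
  shows "(\<Sum>T\<in>Pow X. (-1::'a::comm_ring_1) ^ card T) = (if X = {} then 1 else 0)"
  using prod_diff_conv_sum[OF assms, of "\<lambda>_. 1" "\<lambda>_. 1::'a"] assms
  by (simp add: power_0_left)

lemma virtualize_simps [simp]:
  "xings (virtualize T D) = xings D - T"
  "snxt (virtualize T D) = snxt D"
  "on_path (virtualize T D) = on_path D"
  "rank (virtualize T D) = rank D"
  "visited_before (virtualize T D) = visited_before D"
  "descending (virtualize T D) = descending D"
  "state_sign (virtualize T D) = state_sign D"
proof -
  show snxt: "snxt (virtualize T D) = snxt D"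
    by (simp add: virtualize_def fun_eq_iff snxt_def)
  show on_path: "on_path (virtualize T D) = on_path D"
    by (simp add: fun_eq_iff on_path_def snxt) (simp add: virtualize_def)
  show visited_before: "visited_before (virtualize T D) = visited_before D"
    by (simp add: fun_eq_iff visited_before_def on_path) (simp add: virtualize_def)
  show "descending (virtualize T D) = descending D"
    by (simp add: fun_eq_iff descending_def visited_before) (simp add: virtualize_def)
qed (simp_all add: virtualize_def fun_eq_iff rank_def endpts_def state_sign_def)

lemma coherent_virtualize:
  "coherent (virtualize T D) S \<longleftrightarrow> S \<inter> T = {} \<and> coherent D S"
  by (auto simp: coherent_def) (auto simp: virtualize_def)

definition descending_states :: "nat \<Rightarrow> tdiag \<Rightarrow> nat set set" where
  "descending_states n D = {S. S \<subseteq> xings D \<and> card S = n \<and> coherent D S \<and> descending D S}"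

lemma c_inv_eq_sum_descending_states:
  "c_inv n D = (\<Sum>S\<in>descending_states n D. state_sign D S)"
  by (simp add: c_inv_def descending_states_def)

lemma finite_descending_states:
  "finite (xings D) \<Longrightarrow> finite (descending_states n D)"
  by (rule finite_subset[of _ "Pow (xings D)"]) (auto simp: descending_states_def)

lemma descending_states_virtualize:
  "descending_states n (virtualize T D) = {S \<in> descending_states n D. S \<inter> T = {}}"
  by (auto simp: descending_states_def coherent_virtualize)

lemma alternating_sum_c_inv_virtualize:
  assumes "finite (xings D)" and "finite M"
  shows "(\<Sum>T\<in>Pow M. (-1) ^ card T * c_inv n (virtualize T D))
       = (\<Sum>S | S \<in> descending_states n D \<and> M \<subseteq> S. state_sign D S)"
proof -
  let ?A = "descending_states n D"
  have fin: "finite ?A"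
    using assms(1) by (rule finite_descending_states)
  have inner: "(\<Sum>T\<in>Pow M. (-1) ^ card T * (if S \<inter> T = {} then state_sign D S else 0))
             = (if M \<subseteq> S then state_sign D S else 0)" for S
  proof -
    have "(\<Sum>T\<in>Pow M. (-1) ^ card T * (if S \<inter> T = {} then state_sign D S else 0))
        = state_sign D S * (\<Sum>T\<in>{T \<in> Pow M. S \<inter> T = {}}. (-1) ^ card T)"
      using assms(2) by (simp add: sum.inter_filter[symmetric] sum_distrib_left if_distrib
          mult.commute cong: if_cong)
    also have "{T \<in> Pow M. S \<inter> T = {}} = Pow (M - S)"
      by auto
    finally show ?thesis
      using assms(2) by (simp add: sum_Pow_neg_one_power_card)
  qed
  have "(\<Sum>T\<in>Pow M. (-1) ^ card T * c_inv n (virtualize T D))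
      = (\<Sum>T\<in>Pow M. \<Sum>S\<in>?A. (-1) ^ card T * (if S \<inter> T = {} then state_sign D S else 0))"
    using fin by (simp add: c_inv_eq_sum_descending_states descending_states_virtualize
        sum.inter_filter sum_distrib_left)
  also have "\<dots> = (\<Sum>S\<in>?A. if M \<subseteq> S then state_sign D S else 0)"
    by (subst sum.swap) (simp add: inner)
  also have "\<dots> = (\<Sum>S | S \<in> ?A \<and> M \<subseteq> S. state_sign D S)"
    using fin by (simp add: sum.inter_filter)
  finally show ?thesis .
qed

lemma gpv_degree_less_c_inv: "gpv_degree_less (c_inv n) (Suc n)"
  unfolding gpv_degree_less_def
proof (intro allI impI)
  fix D M
  assume DM: "wf_tangle D \<and> M \<subseteq> xings D \<and> card M = Suc n"
  then have fin: "finite (xings D)" and "finite M"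
    using finite_subset by (auto simp: wf_tangle_def)
  have "\<not> M \<subseteq> S" if "S \<in> descending_states n D" for S
    using that DM card_mono[OF finite_subset[OF _ fin], of S M]
    by (auto simp: descending_states_def)
  then have no_state: "{S. S \<in> descending_states n D \<and> M \<subseteq> S} = {}"
    by blast
  show "(\<Sum>T\<in>Pow M. (-1) ^ card T * c_inv n (virtualize T D)) = 0"
    unfolding alternating_sum_c_inv_virtualize[OF fin \<open>finite M\<close>] no_state by simp
qed

lemma snxt_ov:
  assumes "inj_on (ov D) S" and "c \<in> S"
  shows "snxt D S (ov D c) = nxt D (un D c)"
proof -
  have "(THE c'. c' \<in> S \<and> ov D c = ov D c') = c"
    using assms by (auto dest: inj_onD)
  then show ?thesis
    using assms(2) by (auto simp: snxt_def)
qed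

lemma snxt_un:
  assumes "inj_on (un D) S" and "ov D ` S \<inter> un D ` S = {}" and "c \<in> S"
  shows "snxt D S (un D c) = nxt D (ov D c)"
proof -
  have "(THE c'. c' \<in> S \<and> un D c = un D c') = c"
    using assms by (auto dest: inj_onD)
  moreover have "\<not> (\<exists>c' \<in> S. un D c = ov D c')"
    using assms by blast
  ultimately show ?thesis
    using assms(3) by (auto simp: snxt_def)
qed

lemma snxt_unsmoothed:
  assumes "x \<notin> ov D ` S" and "x \<notin> un D ` S"
  shows "snxt D S x = nxt D x"
  using assms by (auto simp: snxt_def)

lemma on_path_iff_string:
  assumes "e \<in> ins D" and "(snxt D S ^^ m) e \<in> outs D"
    and "\<forall>d < m. (snxt D S ^^ d) e \<notin> outs D"
  shows "on_path D S e d x \<longleftrightarrow> d \<le> m \<and> (snxt D S ^^ d) e = x"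
  using assms by (auto simp: on_path_def) (meson not_le)

lemma mod_6_cases:
  fixes x :: nat
  obtains k where "x = 6*k" | k where "x = 6*k+1" | k where "x = 6*k+2"
    | k where "x = 6*k+3" | k where "x = 6*k+4" | k where "x = 6*k+5"
proof -
  have "x = 6*(x div 6) + x mod 6"
    by simp
  moreover have "x mod 6 = 0 \<or> x mod 6 = 1 \<or> x mod 6 = 2 \<or> x mod 6 = 3 \<or> x mod 6 = 4 \<or> x mod 6 = 5"
    by presburger
  ultimately show ?thesis
    using that by (elim disjE) (metis add_0_right)+
qed

lemma mod_6_add_simps [simp]:
  "(6*k) mod 6 = (0::nat)" "(6*k+1) mod 6 = 1" "(6*k+2) mod 6 = 2" "(6*k+3) mod 6 = 3"
  "(6*k+4) mod 6 = 4" "(6*k+5) mod 6 = 5"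
  "Suc (6*k) mod 6 = 1" "Suc (Suc (6*k)) mod 6 = 2" "Suc (Suc (Suc (6*k))) mod 6 = 3"
  "Suc (Suc (Suc (Suc (6*k)))) mod 6 = 4" "Suc (Suc (Suc (Suc (Suc (6*k))))) mod 6 = 5"
  by presburger+

text \<open>
  Block k < n has inputs 6k, 6k+2, outputs 6k+1, 6k+3
  and the over- and under-passage 6k+4, 6k+5 of crossing k: the string from 6k passes over
  crossing k to 6k+3, the string from 6k+2 under it to 6k+1.  Smoothing crossing k gives
  the strings 6k \<rightarrow> 6k+4 \<rightarrow> 6k+1 and 6k+2 \<rightarrow> 6k+5 \<rightarrow> 6k+3, coherent and descending.  The
  crossingless string 6n \<rightarrow> 6n+4 \<rightarrow> 6n+3 only keeps the tangle nonempty for n = 0.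
\<close>

definition example_pts :: "nat \<Rightarrow> nat set" where
  "example_pts n = {..<6*n} \<union> {6*n, 6*n+3, 6*n+4}"

definition example_nxt :: "nat \<Rightarrow> nat" where
  "example_nxt x =
     (if x mod 6 = 0 then x+4 else if x mod 6 = 2 then x+3 else
      if x mod 6 = 4 then x-1 else if x mod 6 = 5 then x-4 else x)"

definition example_prev :: "nat \<Rightarrow> nat" where
  "example_prev x =
     (if x mod 6 = 4 then x-4 else if x mod 6 = 5 then x-3 else
      if x mod 6 = 3 then x+1 else if x mod 6 = 1 then x+4 else x)"

definition example_tangle :: "nat \<Rightarrow> tdiag" where
  "example_tangle n =
     \<lparr>pts = example_pts n, nxt = example_nxt,
      ins = {x \<in> example_pts n. x mod 6 = 0 \<or> x mod 6 = 2},
      outs = {x \<in> example_pts n. x mod 6 = 1 \<or> x mod 6 = 3},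
      lab = id, xings = {..<n}, ov = \<lambda>k. 6*k+4, un = \<lambda>k. 6*k+5, wr = \<lambda>_. 1\<rparr>"

lemma example_tangle_simps [simp]:
  "pts (example_tangle n) = example_pts n"
  "nxt (example_tangle n) = example_nxt"
  "ins (example_tangle n) = {x \<in> example_pts n. x mod 6 = 0 \<or> x mod 6 = 2}"
  "outs (example_tangle n) = {x \<in> example_pts n. x mod 6 = 1 \<or> x mod 6 = 3}"
  "lab (example_tangle n) = id"
  "xings (example_tangle n) = {..<n}"
  "ov (example_tangle n) = (\<lambda>k. 6*k+4)"
  "un (example_tangle n) = (\<lambda>k. 6*k+5)"
  "wr (example_tangle n) = (\<lambda>_. 1)"
  by (simp_all add: example_tangle_def)

lemma endpts_example_tangle:
  "endpts (example_tangle n) = {x \<in> example_pts n. x mod 6 < 4}"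
  by (auto simp: endpts_def)

lemma card_mod_6_less_4:
  "i \<le> 4 \<Longrightarrow> card {y. y < 6*k+i \<and> y mod 6 < (4::nat)} = 4*k+i"
proof (induction k arbitrary: i)
  case 0
  then have "{y. y < i \<and> y mod 6 < (4::nat)} = {..<i}"
    by auto
  then show ?case
    by simp
next
  case (Suc k)
  have "{y. y < 6*Suc k+i \<and> y mod 6 < (4::nat)}
      = {y. y < 6*k+4 \<and> y mod 6 < 4} \<union> {6*k+6..<6*k+6+i}"
    using Suc.prems by auto presburger+
  moreover have "card ({y. y < 6*k+4 \<and> y mod 6 < (4::nat)} \<union> {6*k+6..<6*k+6+i})
      = card {y. y < 6*k+4 \<and> y mod 6 < (4::nat)} + card {6*k+6..<6*k+6+i}"
    by (rule card_Un_disjoint) auto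
  ultimately show ?case
    using Suc.IH[of 4] by simp
qed

lemma rank_example_tangle_eq_card:
  assumes "x \<le> 6*n"
  shows "rank (example_tangle n) x = card {y. y < x \<and> y mod 6 < (4::nat)}"
proof -
  have "{y \<in> endpts (example_tangle n). lab (example_tangle n) y < x} = {y. y < x \<and> y mod 6 < 4}"
    using assms by (auto simp: endpts_example_tangle example_pts_def)
  then show ?thesis
    by (simp add: rank_def)
qed

lemma rank_example_tangle:
  "k < n \<Longrightarrow> i \<le> 4 \<Longrightarrow> rank (example_tangle n) (6*k+i) = 4*k+i"
  "rank (example_tangle n) (6*n) = 4*n"
  "rank (example_tangle n) (6*n+3) = 4*n+1"
proof -
  show "k < n \<Longrightarrow> i \<le> 4 \<Longrightarrow> rank (example_tangle n) (6*k+i) = 4*k+i"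
    by (simp add: rank_example_tangle_eq_card card_mod_6_less_4)
  show "rank (example_tangle n) (6*n) = 4*n"
    using card_mod_6_less_4[of 0 n] by (simp add: rank_example_tangle_eq_card)
  have "{y \<in> endpts (example_tangle n). lab (example_tangle n) y < 6*n+3}
      = {y. y < 6*n+1 \<and> y mod 6 < 4}"
    by (auto simp: endpts_example_tangle example_pts_def)
  then show "rank (example_tangle n) (6*n+3) = 4*n+1"
    using card_mod_6_less_4[of 1 n] by (simp add: rank_def)
qed

lemma bij_betw_example_nxt:
  "bij_betw example_nxt (example_pts n - outs (example_tangle n))
     (example_pts n - ins (example_tangle n))"
proof (rule bij_betw_byWitness[where f' = example_prev]; intro ballI image_subsetI)
  show "example_prev (example_nxt x) = x" if "x \<in> example_pts n - outs (example_tangle n)" for x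
    using that by (cases x rule: mod_6_cases;
      auto simp: example_pts_def example_nxt_def example_prev_def; presburger)
  show "example_nxt (example_prev x) = x" if "x \<in> example_pts n - ins (example_tangle n)" for x
    using that by (cases x rule: mod_6_cases;
      auto simp: example_pts_def example_nxt_def example_prev_def; presburger)
  show "example_nxt x \<in> example_pts n - ins (example_tangle n)"
    if "x \<in> example_pts n - outs (example_tangle n)" for x
    using that by (cases x rule: mod_6_cases;
      auto simp: example_pts_def example_nxt_def; presburger)
  show "example_prev x \<in> example_pts n - outs (example_tangle n)"
    if "x \<in> example_pts n - ins (example_tangle n)" for x
    using that by (cases x rule: mod_6_cases;
      auto simp: example_pts_def example_prev_def; presburger)
qed

lemma wf_tangle_example_tangle: "wf_tangle (example_tangle n)"
proof -
  have "finite (example_pts n)"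
    by (simp add: example_pts_def)
  moreover have "e \<in> ins (example_tangle n) \<longleftrightarrow> even (rank (example_tangle n) e)"
    if "e \<in> endpts (example_tangle n)" for e
  proof (cases "e = 6*n+3")
    case False
    then have e: "e \<le> 6*n" "e mod 6 < 4"
      using that by (auto simp: endpts_example_tangle example_pts_def)
    then have "rank (example_tangle n) e = 4*(e div 6) + e mod 6"
      using card_mod_6_less_4[of "e mod 6" "e div 6"] by (simp add: rank_example_tangle_eq_card)
    moreover have "even (e mod 6) \<longleftrightarrow> e mod 6 = 0 \<or> e mod 6 = 2"
      using e(2) by presburger
    ultimately show ?thesis
      using that by (auto simp: endpts_example_tangle)
  qed (simp add: rank_example_tangle(3))
  moreover have "(\<lambda>k. 6*k+4) ` {..<n} \<inter> (\<lambda>k. 6*k+5) ` {..<(n::nat)} = {}"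
    by auto presburger
  moreover have "(\<lambda>k. 6*k+4) ` {..<n} \<subseteq> example_pts n - endpts (example_tangle n)"
    and "(\<lambda>k. 6*k+5) ` {..<n} \<subseteq> example_pts n - endpts (example_tangle n)"
    by (auto simp: endpts_example_tangle example_pts_def; presburger)+
  ultimately show ?thesis
    using bij_betw_example_nxt unfolding wf_tangle_def
    by (auto simp: inj_on_def example_pts_def; presburger)
qed

abbreviation example_smoothing :: "nat \<Rightarrow> nat \<Rightarrow> nat" where
  "example_smoothing n \<equiv> snxt (example_tangle n) {..<n}"

lemma example_smoothing_simps:
  "example_smoothing n (6*k) = 6*k+4"
  "k < n \<Longrightarrow> example_smoothing n (6*k+4) = 6*k+1"
  "k < n \<Longrightarrow> example_smoothing n (6*k+2) = 6*k+5"
  "k < n \<Longrightarrow> example_smoothing n (6*k+5) = 6*k+3"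
  "example_smoothing n (6*n+4) = 6*n+3"
proof -
  have inj: "inj_on (ov (example_tangle n)) {..<n}" "inj_on (un (example_tangle n)) {..<n}"
    by (simp_all add: inj_on_def)
  have disj: "ov (example_tangle n) ` {..<n} \<inter> un (example_tangle n) ` {..<n} = {}"
    by auto presburger
  show "example_smoothing n (6*k) = 6*k+4"
    by (subst snxt_unsmoothed) (auto simp: example_nxt_def; presburger)+
  show "k < n \<Longrightarrow> example_smoothing n (6*k+4) = 6*k+1"
    using snxt_ov[OF inj(1), of k] by (simp add: example_nxt_def)
  show "k < n \<Longrightarrow> example_smoothing n (6*k+2) = 6*k+5"
    by (subst snxt_unsmoothed) (auto simp: example_nxt_def; presburger)+
  show "k < n \<Longrightarrow> example_smoothing n (6*k+5) = 6*k+3"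
    using snxt_un[OF inj(2) disj, of k] by (simp add: example_nxt_def)
  show "example_smoothing n (6*n+4) = 6*n+3"
    by (subst snxt_unsmoothed) (auto simp: example_nxt_def; presburger)+
qed

lemma ins_example_tangle_cases:
  assumes "e \<in> ins (example_tangle n)"
  obtains k where "k < n" "e = 6*k" | k where "k < n" "e = 6*k+2" | "e = 6*n"
  using assms
proof (cases e rule: mod_6_cases)
  case (1 k)
  with assms have "k \<le> n"
    by (auto simp: example_pts_def; presburger)
  then show ?thesis
    using 1 that(1)[of k] that(3) by (cases "k = n") auto
next
  case (3 k)
  with assms have "k < n"
    by (auto simp: example_pts_def; presburger)
  then show ?thesis
    using 3 that(2)[of k] by simp
qed (use assms in simp_all)

lemma example_string:
  assumes "e \<in> ins (example_tangle n)"
  shows "e \<notin> outs (example_tangle n) \<and>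
    example_smoothing n e \<notin> outs (example_tangle n) \<and>
    example_smoothing n (example_smoothing n e) \<in> outs (example_tangle n) \<and>
    rank (example_tangle n) (example_smoothing n (example_smoothing n e))
      = Suc (rank (example_tangle n) e)"
  using assms
proof (cases rule: ins_example_tangle_cases)
  case (1 k)
  then show ?thesis
    using rank_example_tangle(1)[of k n 0] rank_example_tangle(1)[of k n 1]
      example_smoothing_simps(2)[OF 1(1)]
    by (simp add: example_smoothing_simps example_pts_def)
next
  case (2 k)
  then show ?thesis
    using rank_example_tangle(1)[of k n 2] rank_example_tangle(1)[of k n 3]
      example_smoothing_simps(3,4)[OF 2(1)]
    by (simp add: example_smoothing_simps example_pts_def)
next
  case 3
  then show ?thesis
    using rank_example_tangle(2,3)
    by (simp add: example_smoothing_simps example_pts_def)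
qed

lemma on_path_example_tangle:
  "on_path (example_tangle n) {..<n} e d x \<longleftrightarrow>
     e \<in> ins (example_tangle n) \<and> d \<le> 2 \<and> (example_smoothing n ^^ d) e = x"
proof (cases "e \<in> ins (example_tangle n)")
  case True
  then have "\<forall>d < 2. (example_smoothing n ^^ d) e \<notin> outs (example_tangle n)"
    using example_string[OF True] by (auto simp: less_2_cases_iff)
  then show ?thesis
    using True example_string[OF True] on_path_iff_string[where m = 2]
    by (simp add: numeral_2_eq_2)
qed (auto simp: on_path_def)

lemma example_pts_on_strings:
  assumes "x \<in> example_pts n"
  shows "\<exists>e \<in> ins (example_tangle n). \<exists>d \<le> 2. (example_smoothing n ^^ d) e = x"
proof (cases x rule: mod_6_cases)
  case (1 k)
  then show ?thesis
    using assms by (intro bexI[of _ x] exI[of _ 0]) auto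
next
  case (2 k)
  then have "k < n"
    using assms by (auto simp: example_pts_def; presburger)
  then show ?thesis
    using 2 by (intro bexI[of _ "6*k"] exI[of _ 2])
      (auto simp: example_pts_def example_smoothing_simps numeral_2_eq_2)
next
  case (3 k)
  then show ?thesis
    using assms by (intro bexI[of _ x] exI[of _ 0]) auto
next
  case (4 k)
  then have "k < n \<or> k = n"
    using assms by (auto simp: example_pts_def; presburger)
  then show ?thesis
  proof
    assume "k < n"
    then show ?thesis
      using 4 example_smoothing_simps(3,4)[of k n]
      by (intro bexI[of _ "6*k+2"] exI[of _ 2])
        (auto simp: example_pts_def numeral_2_eq_2)
  next
    assume "k = n"
    then show ?thesis
      using 4 example_smoothing_simps(1)[of n n] example_smoothing_simps(5)[of n]
      by (intro bexI[of _ "6*n"] exI[of _ 2])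
        (auto simp: example_pts_def numeral_2_eq_2)
  qed
next
  case (5 k)
  then have "k \<le> n"
    using assms by (auto simp: example_pts_def; presburger)
  then show ?thesis
    using 5 example_smoothing_simps(1)[of n k] by (intro bexI[of _ "6*k"] exI[of _ 1])
      (auto simp: example_pts_def)
next
  case (6 k)
  then have "k < n"
    using assms by (auto simp: example_pts_def; presburger)
  then show ?thesis
    using 6 example_smoothing_simps(3)[of k n] by (intro bexI[of _ "6*k+2"] exI[of _ 1])
      (auto simp: example_pts_def)
qed

lemma coherent_example_tangle: "coherent (example_tangle n) {..<n}"
  unfolding coherent_def
proof (intro conjI ballI allI impI)
  show "\<exists>e d. on_path (example_tangle n) {..<n} e d x" if "x \<in> pts (example_tangle n)" for x
    using example_pts_on_strings[of x n] that by (auto simp: on_path_example_tangle)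
  show "rank (example_tangle n) (lab (example_tangle n) x)
      = Suc (rank (example_tangle n) (lab (example_tangle n) e))"
    if "on_path (example_tangle n) {..<n} e d x \<and> x \<in> outs (example_tangle n)" for e d x
  proof -
    have e: "e \<in> ins (example_tangle n)" and "d \<le> 2" and x: "(example_smoothing n ^^ d) e = x"
      using that by (auto simp: on_path_example_tangle)
    then have "d = 2"
      using that example_string[OF e] by (auto simp: le_Suc_eq numeral_2_eq_2)
    then show ?thesis
      using x example_string[OF e] by (simp add: numeral_2_eq_2)
  qed
qed simp

lemma descending_example_tangle: "descending (example_tangle n) {..<n}"
  unfolding descending_def visited_before_def
proof
  fix c
  assume "c \<in> {..<n}"
  then have "on_path (example_tangle n) {..<n} (6*c) 1 (ov (example_tangle n) c)"
    and "on_path (example_tangle n) {..<n} (6*c+2) 1 (un (example_tangle n) c)"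
    using example_smoothing_simps(3)[of c n]
    by (auto simp: on_path_example_tangle example_smoothing_simps example_pts_def)
  moreover have "lab (example_tangle n) (6*c) < lab (example_tangle n) (6*c+2)"
    by simp
  ultimately show "\<exists>e1 d1 e2 d2. on_path (example_tangle n) {..<n} e1 d1 (ov (example_tangle n) c) \<and>
      on_path (example_tangle n) {..<n} e2 d2 (un (example_tangle n) c) \<and>
      (lab (example_tangle n) e1 < lab (example_tangle n) e2 \<or> e1 = e2 \<and> d1 < d2)"
    by blast
qed

lemma descending_states_example_tangle:
  "descending_states n (example_tangle n) = {{..<n}}"
proof -
  have "S = {..<n}" if "S \<subseteq> {..<n}" and "card S = n" for S
    using that card_subset_eq[of "{..<n}" S] by simp
  then show ?thesis
    using coherent_example_tangle descending_example_tangle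
    by (auto simp: descending_states_def)
qed

lemma not_gpv_degree_less_c_inv: "\<not> gpv_degree_less (c_inv n) n"
proof
  assume "gpv_degree_less (c_inv n) n"
  then have "(\<Sum>T\<in>Pow {..<n}. (-1) ^ card T * c_inv n (virtualize T (example_tangle n))) = 0"
    using wf_tangle_example_tangle by (auto simp: gpv_degree_less_def)
  moreover have "{S. S \<in> descending_states n (example_tangle n) \<and> {..<n} \<subseteq> S} = {{..<n}}"
    by (auto simp: descending_states_example_tangle)
  ultimately show False
    by (simp add: alternating_sum_c_inv_virtualize state_sign_def)
qed

theorem mainTheorem5:
  fixes n :: nat
  shows "gpv_degree (c_inv n) n"
  unfolding gpv_degree_def using gpv_degree_less_c_inv not_gpv_degree_less_c_inv by blast

end
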